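(* Let $k<l$ be positive integers and $\gamma\in PU(k,l)$. Then $\gamma$ has a fixed point in the closure $\overline{\mathbb{H}^{k,l}_{\mathbb{C}}}$ of $\mathbb{H}^{k,l}_{\mathbb{C}}$ in $\mathbb{P}^{k+l-1}_{\mathbb{C}}$.
   Context: $\mathbb{C}^{k,l}$ is $\mathbb{C}^{k+l}$ with the Hermitian form $\prec u,v\succ_{k,l}=-\sum_{j=1}^k u_j\bar v_j+\sum_{j=k+1}^{k+l}u_j\bar v_j$; $N_-^{k,l}$ is the set of vectors $v$ with $\prec v,v\succ_{k,l}<0$; $\mathbb{H}^{k,l}_{\mathbb{C}}=[N_-^{k,l}]\subset\mathbb{P}^{k+l-1}_{\mathbb{C}}$. $U(k,l)\subset GL(k+l,\mathbb{C})$ is the group preserving the form and $PU(k,l)$ its image in $PSL(k+l,\mathbb{C})$. The paper assumes $k<l$ throughout when using this notation. *)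

theory Defs
  imports Complex_Main "Jordan_Normal_Form.Determinant"
begin

definition herm_form :: "nat \<Rightarrow> nat \<Rightarrow> complex vec \<Rightarrow> complex vec \<Rightarrow> complex" where
  "herm_form k l u v =
     (\<Sum>j<k+l. (if j < k then -1 else 1) * (u $ j) * cnj (v $ j))"

definition neg_cone :: "nat \<Rightarrow> nat \<Rightarrow> complex vec set" where
  "neg_cone k l = {v \<in> carrier_vec (k+l). Re (herm_form k l v v) < 0}"

definition U_group :: "nat \<Rightarrow> nat \<Rightarrow> complex mat set" where
  "U_group k l = {A \<in> carrier_mat (k+l) (k+l). det A \<noteq> 0 \<and>
      (\<forall>u \<in> carrier_vec (k+l). \<forall>v \<in> carrier_vec (k+l).
         herm_form k l (A *\<^sub>v u) (A *\<^sub>v v) = herm_form k l u v)}"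

text \<open>A point [v] of P^{k+l-1} (v a nonzero vector of C^{k+l}) lies in the closure
  of H^{k,l} = [N_-^{k,l}] iff it is the limit, in P^{k+l-1}, of a sequence of points
  [w m] with w m in N_-; i.e. iff suitable representatives c m * w m of these points
  converge in C^{k+l} to v (the projective topology is the quotient topology, which
  is first countable, so sequential closure is the closure).\<close>
definition in_closure_H :: "nat \<Rightarrow> nat \<Rightarrow> complex vec \<Rightarrow> bool" where
  "in_closure_H k l v \<longleftrightarrow> v \<in> carrier_vec (k+l) \<and> v \<noteq> 0\<^sub>v (k+l) \<and>
     (\<exists>w c. (\<forall>m. w m \<in> neg_cone k l \<and> c m \<noteq> (0::complex)) \<and>
        (\<forall>j < k+l. (\<lambda>m. (c m \<cdot>\<^sub>v w m) $ j) \<longlonglongrightarrow> v $ j))"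

definition proj_fixed :: "complex mat \<Rightarrow> complex vec \<Rightarrow> bool" where
  "proj_fixed A v \<longleftrightarrow> (\<exists>\<mu>::complex. A *\<^sub>v v = \<mu> \<cdot>\<^sub>v v)"

end

theory Submission
  imports Defs "Jordan_Normal_Form.Jordan_Normal_Form_Existence"
begin

text \<open>If some eigenvector \<open>v\<close> of \<open>A\<close> has \<open>\<prec>v,v\<succ> \<le> 0\<close>, then \<open>[v]\<close> is a fixed point in the
  closure of \<open>H^{k,l}\<close>: perturbing a negative coordinate of \<open>v\<close> pushes it into \<open>N_-\<close>.
  Otherwise every eigenvector is positive, so the eigenvalues are unimodular, eigenvectors
  for distinct eigenvalues are orthogonal, and no Jordan block of size \<open>\<ge> 2\<close> occurs (the
  head of a Jordan chain would be a null eigenvector). Then \<open>A\<close> is diagonalisable and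
  \<open>\<complex>^{k+l}\<close> is the orthogonal sum of positive eigenspaces, so the form would be positive
  semidefinite, contradicting \<open>\<prec>e\<^sub>1,e\<^sub>1\<succ> = -1\<close>.\<close>

definition vsum :: "nat \<Rightarrow> 'i set \<Rightarrow> ('i \<Rightarrow> 'a::comm_monoid_add vec) \<Rightarrow> 'a vec" where
  "vsum n I f = vec n (\<lambda>r. \<Sum>i\<in>I. f i $ r)"

lemma vsum_carrier: "vsum n I f \<in> carrier_vec n"
  and dim_vsum [simp]: "dim_vec (vsum n I f) = n"
  and index_vsum [simp]: "r < n \<Longrightarrow> vsum n I f $ r = (\<Sum>i\<in>I. f i $ r)"
  unfolding vsum_def by simp_all

lemma vsum_cong: "(\<And>i. i \<in> I \<Longrightarrow> f i = g i) \<Longrightarrow> vsum n I f = vsum n I g"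
  unfolding vsum_def by (simp cong: sum.cong)

lemma smult_vsum:
  fixes a :: "'a::comm_semiring_1"
  assumes "\<And>i. i \<in> I \<Longrightarrow> f i \<in> carrier_vec n"
  shows "vsum n I (\<lambda>i. a \<cdot>\<^sub>v f i) = a \<cdot>\<^sub>v vsum n I f"
proof (rule eq_vecI)
  fix r assume "r < dim_vec (a \<cdot>\<^sub>v vsum n I f)"
  then have r: "r < n" by simp
  have "(a \<cdot>\<^sub>v f i) $ r = a * f i $ r" if "i \<in> I" for i
    using assms[OF that] r by simp
  then have "(\<Sum>i\<in>I. (a \<cdot>\<^sub>v f i) $ r) = (\<Sum>i\<in>I. a * f i $ r)"
    by (rule sum.cong[OF refl])
  then show "vsum n I (\<lambda>i. a \<cdot>\<^sub>v f i) $ r = (a \<cdot>\<^sub>v vsum n I f) $ r"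
    using r by (simp add: sum_distrib_left)
qed simp

lemma index_mult_mat_vec_sum:
  assumes "A \<in> carrier_mat m n" "w \<in> carrier_vec n" "r < m"
  shows "(A *\<^sub>v w) $ r = (\<Sum>t<n. A $$ (r,t) * w $ t)"
  using assms by (auto simp: scalar_prod_def lessThan_atLeast0 intro: sum.cong)

lemma mult_mat_vec_vsum:
  fixes A :: "'a::comm_semiring_1 mat"
  assumes A: "A \<in> carrier_mat m n" and f: "\<And>i. i \<in> I \<Longrightarrow> f i \<in> carrier_vec n"
  shows "A *\<^sub>v vsum n I f = vsum m I (\<lambda>i. A *\<^sub>v f i)"
proof (rule eq_vecI)
  fix r assume "r < dim_vec (vsum m I (\<lambda>i. A *\<^sub>v f i))"
  then have r: "r < m" by simp
  have "(A *\<^sub>v vsum n I f) $ r = (\<Sum>t<n. A $$ (r,t) * vsum n I f $ t)"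
    by (rule index_mult_mat_vec_sum[OF A vsum_carrier r])
  also have "\<dots> = (\<Sum>t<n. \<Sum>i\<in>I. A $$ (r,t) * f i $ t)"
    by (intro sum.cong refl) (simp add: sum_distrib_left)
  also have "\<dots> = (\<Sum>i\<in>I. (A *\<^sub>v f i) $ r)"
    by (subst sum.swap) (intro sum.cong refl, simp add: index_mult_mat_vec_sum[OF A f r])
  also have "\<dots> = vsum m I (\<lambda>i. A *\<^sub>v f i) $ r"
    using r by simp
  finally show "(A *\<^sub>v vsum n I f) $ r = vsum m I (\<lambda>i. A *\<^sub>v f i) $ r" .
qed (use A in simp)

lemma herm_form_smult_left:
  "u \<in> carrier_vec (k+l) \<Longrightarrow> herm_form k l (a \<cdot>\<^sub>v u) v = a * herm_form k l u v"
  unfolding herm_form_def by (simp add: sum_distrib_left algebra_simps)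

lemma herm_form_smult_right:
  "v \<in> carrier_vec (k+l) \<Longrightarrow> herm_form k l u (a \<cdot>\<^sub>v v) = cnj a * herm_form k l u v"
  unfolding herm_form_def by (simp add: sum_distrib_left algebra_simps)

lemma herm_form_add_right:
  assumes "v \<in> carrier_vec (k+l)" and "w \<in> carrier_vec (k+l)"
  shows "herm_form k l u (v + w) = herm_form k l u v + herm_form k l u w"
proof -
  have "herm_form k l u (v + w) = (\<Sum>j<k+l. (if j < k then -1 else 1) * u $ j * cnj (v $ j)
      + (if j < k then -1 else 1) * u $ j * cnj (w $ j))"
    unfolding herm_form_def using assms by (intro sum.cong refl) (simp add: distrib_left)
  then show ?thesis by (simp add: sum.distrib herm_form_def)
qed

lemma herm_form_zero_right [simp]: "herm_form k l u (0\<^sub>v (k+l)) = 0"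
  unfolding herm_form_def by simp

lemma herm_form_vsum:
  "herm_form k l (vsum (k+l) I f) (vsum (k+l) J g) = (\<Sum>i\<in>I. \<Sum>j\<in>J. herm_form k l (f i) (g j))"
proof -
  have "herm_form k l (vsum (k+l) I f) (vsum (k+l) J g) =
     (\<Sum>r<k+l. \<Sum>i\<in>I. \<Sum>j\<in>J. (if r < k then -1 else 1) * (f i $ r) * cnj (g j $ r))"
    unfolding herm_form_def
    by (intro sum.cong refl) (simp add: sum_distrib_left sum_distrib_right algebra_simps)
  also have "\<dots> = (\<Sum>i\<in>I. \<Sum>j\<in>J. herm_form k l (f i) (g j))"
    unfolding herm_form_def by (subst sum.swap) (intro sum.cong refl sum.swap)
  finally show ?thesis .
qed

lemma Re_herm_form_self:
  "Re (herm_form k l v v) = (\<Sum>j<k+l. (if j < k then -1 else 1) * Re (v $ j * cnj (v $ j)))"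
  unfolding herm_form_def Re_sum by (intro sum.cong refl) (simp add: mult.assoc)

lemma U_group_carrier: "A \<in> U_group k l \<Longrightarrow> A \<in> carrier_mat (k+l) (k+l)"
  unfolding U_group_def by simp

lemma U_group_herm_form:
  assumes "A \<in> U_group k l" "u \<in> carrier_vec (k+l)" "v \<in> carrier_vec (k+l)"
  shows "herm_form k l (A *\<^sub>v u) (A *\<^sub>v v) = herm_form k l u v"
  using assms unfolding U_group_def by auto

lemma U_group_eigenvalue_unimodular:
  assumes A: "A \<in> U_group k l" and v: "v \<in> carrier_vec (k+l)"
    and eig: "A *\<^sub>v v = a \<cdot>\<^sub>v v" and nonnull: "herm_form k l v v \<noteq> 0"
  shows "a * cnj a = 1"
proof -
  have "herm_form k l v v = (a * cnj a) * herm_form k l v v"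
    using U_group_herm_form[OF A v v] v
    by (simp add: eig herm_form_smult_left herm_form_smult_right mult.commute)
  then show ?thesis using nonnull by simp
qed

lemma U_group_eigenvectors_orthogonal:
  assumes A: "A \<in> U_group k l" and u: "u \<in> carrier_vec (k+l)" and w: "w \<in> carrier_vec (k+l)"
    and eig_u: "A *\<^sub>v u = a \<cdot>\<^sub>v u" and eig_w: "A *\<^sub>v w = b \<cdot>\<^sub>v w"
    and unimodular: "b * cnj b = 1" and "a \<noteq> b"
  shows "herm_form k l u w = 0"
proof (rule ccontr)
  assume nz: "herm_form k l u w \<noteq> 0"
  have "herm_form k l u w = (a * cnj b) * herm_form k l u w"
    using U_group_herm_form[OF A u w] u w
    by (simp add: eig_u eig_w herm_form_smult_left herm_form_smult_right mult.commute)
  then have "a * cnj b = 1" using nz by simp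
  have "a = a * (b * cnj b)" using unimodular by simp
  also have "\<dots> = b * (a * cnj b)" by (simp add: ac_simps)
  also have "\<dots> = b" using \<open>a * cnj b = 1\<close> by simp
  finally show False using \<open>a \<noteq> b\<close> by simp
qed

lemma U_group_no_jordan_chain:
  assumes A: "A \<in> U_group k l" and v: "v \<in> carrier_vec (k+l)" and w: "w \<in> carrier_vec (k+l)"
    and eig: "A *\<^sub>v v = a \<cdot>\<^sub>v v" and nonnull: "herm_form k l v v \<noteq> 0"
  shows "A *\<^sub>v w \<noteq> a \<cdot>\<^sub>v w + v"
proof
  assume chain: "A *\<^sub>v w = a \<cdot>\<^sub>v w + v"
  have unimodular: "a * cnj a = 1"
    by (rule U_group_eigenvalue_unimodular[OF A v eig nonnull])
  have "herm_form k l v w = (a * cnj a) * herm_form k l v w + a * herm_form k l v v"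
    using U_group_herm_form[OF A v w] v w
    by (simp add: eig chain herm_form_smult_left herm_form_smult_right herm_form_add_right
        algebra_simps)
  then have "a * herm_form k l v v = 0" using unimodular by simp
  then show False using unimodular nonnull by auto
qed

lemma in_closure_H_if_nonpositive:
  assumes k: "0 < k" and v: "v \<in> carrier_vec (k+l)" "v \<noteq> 0\<^sub>v (k+l)"
    and nonpos: "Re (herm_form k l v v) \<le> 0"
  shows "in_closure_H k l v"
proof -
  text \<open>The sign of the perturbation \<open>t\<close> of the first (negative) coordinate is chosen so
    that the cross term \<open>2 t Re (v $ 0)\<close> cannot raise the form value.\<close>
  define s :: real where "s = (if 0 \<le> Re (v $ 0) then 1 else -1)"
  define t where "t = (\<lambda>m::nat. s * inverse (real (Suc m)))"
  define w where "w = (\<lambda>m. v + complex_of_real (t m) \<cdot>\<^sub>v unit_vec (k+l) 0)"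
  have t_sq: "0 < t m * t m" for m
    unfolding t_def s_def by simp
  have t_cross: "0 \<le> t m * Re (v $ 0)" for m
    unfolding t_def s_def by (auto simp: mult_nonneg_nonpos)
  have w_carrier: "w m \<in> carrier_vec (k+l)" for m
    unfolding w_def using v by auto
  have w_index: "w m $ j = v $ j + (if j = 0 then complex_of_real (t m) else 0)"
    if "j < k+l" for m j
    unfolding w_def using v that k by auto
  have "Re (herm_form k l (w m) (w m)) = Re (herm_form k l v v) - (2 * t m * Re (v $ 0) + t m * t m)"
    for m
  proof -
    have "(if j < k then -1 else 1) * Re (w m $ j * cnj (w m $ j)) =
        (if j < k then -1 else 1) * Re (v $ j * cnj (v $ j))
        - (if j = 0 then 2 * t m * Re (v $ 0) + t m * t m else 0)" if "j < k+l" for j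
      unfolding w_index[OF that] using k
      by (auto simp: complex_mult_cnj power2_eq_square algebra_simps)
    then show ?thesis
      using k by (simp add: Re_herm_form_self sum_subtractf)
  qed
  then have w_neg: "w m \<in> neg_cone k l" for m
    unfolding neg_cone_def using w_carrier nonpos t_sq[of m] t_cross[of m] by auto
  have "t \<longlonglongrightarrow> 0"
    unfolding t_def by (rule tendsto_mult_right_zero[OF LIMSEQ_inverse_real_of_nat])
  show ?thesis
    unfolding in_closure_H_def
  proof (intro conjI exI[of _ w] exI[of _ "\<lambda>_. 1"] allI impI)
    fix j assume j: "j < k+l"
    have "(\<lambda>m. if j = 0 then complex_of_real (t m) else 0) \<longlonglongrightarrow> 0"
      using tendsto_of_real[OF \<open>t \<longlonglongrightarrow> 0\<close>] by (cases "j = 0") simp_all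
    then have "(\<lambda>m. v $ j + (if j = 0 then complex_of_real (t m) else 0)) \<longlonglongrightarrow> v $ j + 0"
      by (intro tendsto_add tendsto_const)
    then show "(\<lambda>m. (1 \<cdot>\<^sub>v w m) $ j) \<longlonglongrightarrow> v $ j"
      using j w_carrier by (simp add: w_index)
  qed (use v w_neg in auto)
qed

text \<open>\<open>s i\<close> marks a superdiagonal entry \<open>1\<close> at \<open>(i, i+1)\<close>; such an entry lies inside a single
  Jordan block, whence \<open>d (Suc i) = d i\<close>.\<close>
lemma jordan_matrix_index:
  "\<exists>d s. (\<forall>i<sum_list (map fst n_as). \<forall>j<sum_list (map fst n_as).
      jordan_matrix n_as $$ (i,j) = (if i = j then d i else if Suc i = j \<and> s i then 1 else 0))
    \<and> (\<forall>i. Suc i < sum_list (map fst n_as) \<longrightarrow> s i \<longrightarrow> d (Suc i) = d i)"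
proof (induction n_as)
  case Nil
  then show ?case by simp
next
  case (Cons na n_as)
  obtain m a where na: "na = (m,a)" by force
  let ?N = "sum_list (map fst n_as)"
  from Cons obtain d s where
    index: "\<forall>i<?N. \<forall>j<?N. jordan_matrix n_as $$ (i,j) =
      (if i = j then d i else if Suc i = j \<and> s i then 1 else 0)"
    and chain: "\<forall>i. Suc i < ?N \<longrightarrow> s i \<longrightarrow> d (Suc i) = d i" by blast
  define d' where "d' = (\<lambda>i. if i < m then a else d (i - m))"
  define s' where "s' = (\<lambda>i. if i < m then Suc i < m else s (i - m))"
  show ?case
  proof (intro exI[of _ d'] exI[of _ s'] conjI allI impI)
    fix i j assume "i < sum_list (map fst (na # n_as))" and "j < sum_list (map fst (na # n_as))"
    then have "i < m + ?N" and "j < m + ?N" by (auto simp: na)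
    then show "jordan_matrix (na # n_as) $$ (i,j) =
        (if i = j then d' i else if Suc i = j \<and> s' i then 1 else 0)"
      unfolding na jordan_matrix_Cons using index[rule_format, of "i - m" "j - m"]
      by (auto simp: d'_def s'_def)
  next
    fix i assume "Suc i < sum_list (map fst (na # n_as))" and "s' i"
    then show "d' (Suc i) = d' i" using chain[rule_format, of "i - m"]
      by (auto simp: d'_def s'_def na Suc_diff_le split: if_splits)
  qed
qed

lemma mult_mat_vec_col_jordan:
  fixes P J :: "'a::comm_ring_1 mat"
  assumes P: "P \<in> carrier_mat n n" and J: "J \<in> carrier_mat n n" and j: "j < n"
    and J_index: "\<forall>i<n. \<forall>j<n. J $$ (i,j) = (if i = j then d i else if Suc i = j \<and> s i then 1 else 0)"
  shows "P *\<^sub>v col J j = d j \<cdot>\<^sub>v col P j + (if 0 < j \<and> s (j - 1) then col P (j - 1) else 0\<^sub>v n)"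
proof (rule eq_vecI)
  fix r assume "r < dim_vec (d j \<cdot>\<^sub>v col P j + (if 0 < j \<and> s (j - 1) then col P (j - 1) else 0\<^sub>v n))"
  then have r: "r < n" using P by (simp split: if_split_asm)
  have "(P *\<^sub>v col J j) $ r = (\<Sum>i<n. P $$ (r,i) * col J j $ i)"
    using J j by (intro index_mult_mat_vec_sum[OF P _ r]) simp
  also have "\<dots> = (\<Sum>i<n. (if i = j then d j * P $$ (r,i) else 0)
      + (if Suc i = j then (if s i then P $$ (r,i) else 0) else 0))"
    using J j J_index by (intro sum.cong refl) auto
  also have "\<dots> = d j * P $$ (r,j) + (if 0 < j \<and> s (j - 1) then P $$ (r, j - 1) else 0)"
    using j by (cases j) (simp_all add: sum.distrib)
  finally show "(P *\<^sub>v col J j) $ r =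
      (d j \<cdot>\<^sub>v col P j + (if 0 < j \<and> s (j - 1) then col P (j - 1) else 0\<^sub>v n)) $ r"
    using P r j by simp
qed (use P in simp)

lemma eigenbasis_if_no_jordan_chain:
  fixes A :: "complex mat"
  assumes A: "A \<in> carrier_mat n n"
    and no_chain: "\<And>a v w. v \<in> carrier_vec n \<Longrightarrow> w \<in> carrier_vec n \<Longrightarrow> v \<noteq> 0\<^sub>v n \<Longrightarrow>
      A *\<^sub>v v = a \<cdot>\<^sub>v v \<Longrightarrow> A *\<^sub>v w \<noteq> a \<cdot>\<^sub>v w + v"
  shows "\<exists>P Q d. P \<in> carrier_mat n n \<and> Q \<in> carrier_mat n n \<and> P * Q = 1\<^sub>m n \<and>
    (\<forall>j<n. A *\<^sub>v col P j = d j \<cdot>\<^sub>v col P j)"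
proof -
  obtain n_as where "jordan_nf A n_as"
    using jordan_nf_exists[OF A] char_poly_factorized[OF A] by blast
  define J where "J = jordan_matrix n_as"
  obtain P Q where "similar_mat_wit A J P Q"
    using \<open>jordan_nf A n_as\<close> unfolding jordan_nf_def similar_mat_def J_def by blast
  from similar_mat_witD2[OF A this]
  have QP: "Q * P = 1\<^sub>m n" and PQ: "P * Q = 1\<^sub>m n" and A_eq: "A = P * J * Q"
    and J: "J \<in> carrier_mat n n" and P: "P \<in> carrier_mat n n" and Q: "Q \<in> carrier_mat n n"
    by auto
  have "sum_list (map fst n_as) = n"
    using J unfolding J_def by (metis carrier_matD(1) jordan_matrix_dim(1))
  then obtain d s where
    J_index: "\<forall>i<n. \<forall>j<n. J $$ (i,j) = (if i = j then d i else if Suc i = j \<and> s i then 1 else 0)"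
    and d_chain: "\<forall>i. Suc i < n \<longrightarrow> s i \<longrightarrow> d (Suc i) = d i"
    using jordan_matrix_index[of n_as] unfolding J_def by metis
  have "A * P = P * J * (Q * P)"
    unfolding A_eq by (rule assoc_mult_mat[OF mult_carrier_mat[OF P J] Q P])
  then have AP: "A * P = P * J"
    using P J by (simp add: QP)
  have A_col: "A *\<^sub>v col P j = P *\<^sub>v col J j" if "j < n" for j
    using col_mult2[OF A P that] col_mult2[OF P J that] AP by simp
  have col_P: "col P j \<in> carrier_vec n" for j
    using col_dim[of P j] carrier_matD(1)[OF P] by simp
  have col_nonzero: "col P j \<noteq> 0\<^sub>v n" if "j < n" for j
  proof
    assume "col P j = 0\<^sub>v n"
    then have "col (Q * P) j = 0\<^sub>v n"
      using col_mult2[OF Q P that] Q by auto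
    then show False using QP that by (metis col_one index_unit_vec(1) index_zero_vec(1) zero_neq_one)
  qed
  have no_s: "\<not> s j" if "Suc j < n" for j
    \<comment> \<open>the first superdiagonal \<open>1\<close> starts a Jordan chain whose head is an eigenvector\<close>
  proof
    assume "s j"
    define j0 where "j0 = (LEAST j. Suc j < n \<and> s j)"
    have j0: "Suc j0 < n" "s j0"
      using LeastI[of "\<lambda>j. Suc j < n \<and> s j", OF conjI[OF that \<open>s j\<close>]] unfolding j0_def by auto
    have minimal: "\<not> (0 < j0 \<and> s (j0 - 1))"
      using not_less_Least[of "j0 - 1" "\<lambda>j. Suc j < n \<and> s j"] j0 unfolding j0_def[symmetric] by auto
    have "j0 < n" using j0 by simp
    have eig: "A *\<^sub>v col P j0 = d j0 \<cdot>\<^sub>v col P j0"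
      using A_col[OF \<open>j0 < n\<close>] mult_mat_vec_col_jordan[OF P J \<open>j0 < n\<close> J_index] minimal
        col_P[of j0] by auto
    have "A *\<^sub>v col P (Suc j0) = d j0 \<cdot>\<^sub>v col P (Suc j0) + col P j0"
      using A_col[OF j0(1)] mult_mat_vec_col_jordan[OF P J j0(1) J_index] d_chain j0 by simp
    then show False
      using no_chain[OF col_P col_P col_nonzero eig] j0 by simp
  qed
  have "A *\<^sub>v col P j = d j \<cdot>\<^sub>v col P j" if "j < n" for j
    using A_col[OF that] mult_mat_vec_col_jordan[OF P J that J_index] no_s[of "j - 1"] that col_P[of j]
    by auto
  then show ?thesis using P Q PQ by blast
qed

lemma eigenvector_decomposition:
  fixes A :: "complex mat"
  assumes A: "A \<in> carrier_mat n n"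
    and no_chain: "\<And>a v w. v \<in> carrier_vec n \<Longrightarrow> w \<in> carrier_vec n \<Longrightarrow> v \<noteq> 0\<^sub>v n \<Longrightarrow>
      A *\<^sub>v v = a \<cdot>\<^sub>v v \<Longrightarrow> A *\<^sub>v w \<noteq> a \<cdot>\<^sub>v w + v"
    and x: "x \<in> carrier_vec n"
  shows "\<exists>L y. finite L \<and> (\<forall>a. y a \<in> carrier_vec n \<and> A *\<^sub>v y a = a \<cdot>\<^sub>v y a) \<and> x = vsum n L y"
proof -
  obtain P Q d where P: "P \<in> carrier_mat n n" and Q: "Q \<in> carrier_mat n n" and PQ: "P * Q = 1\<^sub>m n"
    and eig: "\<And>j. j < n \<Longrightarrow> A *\<^sub>v col P j = d j \<cdot>\<^sub>v col P j"
    using eigenbasis_if_no_jordan_chain[OF A no_chain] by blast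
  define c where "c = Q *\<^sub>v x"
  define y where "y a = vsum n {j\<in>{..<n}. d j = a} (\<lambda>j. c $ j \<cdot>\<^sub>v col P j)" for a
  have term_carrier: "c $ j \<cdot>\<^sub>v col P j \<in> carrier_vec n" for j
    using col_dim[of P j] carrier_matD(1)[OF P] by simp
  have "x = P *\<^sub>v c"
    unfolding c_def using assoc_mult_mat_vec[OF P Q x] PQ x by simp
  have "vsum n (d ` {..<n}) y = x"
  proof (rule eq_vecI)
    fix r assume "r < dim_vec x"
    then have r: "r < n" using x by simp
    have "vsum n (d ` {..<n}) y $ r =
        (\<Sum>a\<in>d ` {..<n}. \<Sum>j\<in>{j\<in>{..<n}. d j = a}. (c $ j \<cdot>\<^sub>v col P j) $ r)"
      unfolding y_def using r by simp
    also have "\<dots> = (\<Sum>a\<in>d ` {..<n}. \<Sum>j\<in>{j\<in>{..<n}. d j = a}. c $ j * P $$ (r,j))"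
      using r carrier_matD[OF P] by (intro sum.cong refl) auto
    also have "\<dots> = (\<Sum>j<n. c $ j * P $$ (r,j))"
      by (rule sum.group) auto
    also have "\<dots> = x $ r"
      unfolding \<open>x = P *\<^sub>v c\<close> using index_mult_mat_vec_sum[OF P _ r, of c] Q x
      by (simp add: c_def mult.commute)
    finally show "vsum n (d ` {..<n}) y $ r = x $ r" .
  qed (use x in simp)
  moreover have "A *\<^sub>v y a = a \<cdot>\<^sub>v y a" for a
  proof -
    have "A *\<^sub>v y a = vsum n {j\<in>{..<n}. d j = a} (\<lambda>j. A *\<^sub>v (c $ j \<cdot>\<^sub>v col P j))"
      unfolding y_def by (rule mult_mat_vec_vsum[OF A term_carrier])
    also have "\<dots> = vsum n {j\<in>{..<n}. d j = a} (\<lambda>j. a \<cdot>\<^sub>v (c $ j \<cdot>\<^sub>v col P j))"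
      using eig A col_dim[of P] carrier_matD(1)[OF P]
      by (intro vsum_cong) (auto simp: mult_mat_vec smult_smult_assoc mult.commute)
    also have "\<dots> = a \<cdot>\<^sub>v y a"
      unfolding y_def by (rule smult_vsum[OF term_carrier])
    finally show ?thesis .
  qed
  ultimately show ?thesis
    by (intro exI[of _ "d ` {..<n}"] exI[of _ y]) (simp add: y_def vsum_carrier)
qed

lemma U_group_herm_form_nonneg:
  assumes A: "A \<in> U_group k l"
    and eigen_pos: "\<And>a v. v \<in> carrier_vec (k+l) \<Longrightarrow> v \<noteq> 0\<^sub>v (k+l) \<Longrightarrow> A *\<^sub>v v = a \<cdot>\<^sub>v v \<Longrightarrow>
      0 < Re (herm_form k l v v)"
    and x: "x \<in> carrier_vec (k+l)"
  shows "0 \<le> Re (herm_form k l x x)"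
proof -
  have nonnull: "herm_form k l v v \<noteq> 0"
    if "v \<in> carrier_vec (k+l)" "v \<noteq> 0\<^sub>v (k+l)" "A *\<^sub>v v = a \<cdot>\<^sub>v v" for a v
    using eigen_pos[OF that] by auto
  obtain L y where "finite L" and y: "\<And>a. y a \<in> carrier_vec (k+l)"
    and y_eig: "\<And>a. A *\<^sub>v y a = a \<cdot>\<^sub>v y a" and x_eq: "x = vsum (k+l) L y"
    using eigenvector_decomposition[OF U_group_carrier[OF A] _ x]
      U_group_no_jordan_chain[OF A _ _ _ nonnull] by metis
  have orthogonal: "herm_form k l (y a) (y b) = 0" if "a \<noteq> b" for a b
  proof (cases "y b = 0\<^sub>v (k+l)")
    case False
    show ?thesis
      by (rule U_group_eigenvectors_orthogonal[OF A y y y_eig y_eig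
          U_group_eigenvalue_unimodular[OF A y y_eig nonnull[OF y False y_eig]] that])
  qed simp
  have "herm_form k l x x = (\<Sum>a\<in>L. \<Sum>b\<in>L. herm_form k l (y a) (y b))"
    unfolding x_eq by (rule herm_form_vsum)
  also have "\<dots> = (\<Sum>a\<in>L. herm_form k l (y a) (y a))"
  proof (rule sum.cong[OF refl])
    fix a assume "a \<in> L"
    have "(\<Sum>b\<in>L - {a}. herm_form k l (y a) (y b)) = 0"
      by (rule sum.neutral) (auto intro: orthogonal)
    then show "(\<Sum>b\<in>L. herm_form k l (y a) (y b)) = herm_form k l (y a) (y a)"
      using \<open>finite L\<close> \<open>a \<in> L\<close> by (simp add: sum.remove)
  qed
  finally have "Re (herm_form k l x x) = (\<Sum>a\<in>L. Re (herm_form k l (y a) (y a)))"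
    by simp
  also have "\<dots> \<ge> 0"
  proof (rule sum_nonneg)
    fix a
    show "0 \<le> Re (herm_form k l (y a) (y a))"
      using eigen_pos[OF y _ y_eig, of a] by (cases "y a = 0\<^sub>v (k+l)") auto
  qed
  finally show ?thesis .
qed

lemma Re_herm_form_unit_vec_0:
  assumes "0 < k"
  shows "Re (herm_form k l (unit_vec (k+l) 0) (unit_vec (k+l) 0)) = -1"
proof -
  have "Re (herm_form k l (unit_vec (k+l) 0) (unit_vec (k+l) 0)) = (\<Sum>j<k+l. if j = 0 then -1 else 0)"
    unfolding Re_herm_form_self using assms by (intro sum.cong refl) auto
  also have "\<dots> = -1"
    using assms by simp
  finally show ?thesis .
qed

theorem mainTheorem13:
  fixes k l :: nat and A :: "complex mat"
  assumes "0 < k" and "k < l" and "A \<in> U_group k l"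
  shows "\<exists>v. in_closure_H k l v \<and> proj_fixed A v"
proof (rule ccontr)
  assume no_fixed_point: "\<not> ?thesis"
  have "0 < Re (herm_form k l v v)"
    if "v \<in> carrier_vec (k+l)" "v \<noteq> 0\<^sub>v (k+l)" "A *\<^sub>v v = a \<cdot>\<^sub>v v" for a v
  proof (rule ccontr)
    assume "\<not> ?thesis"
    then have "in_closure_H k l v"
      using in_closure_H_if_nonpositive[OF \<open>0 < k\<close> that(1,2)] by simp
    moreover have "proj_fixed A v"
      unfolding proj_fixed_def using that(3) by blast
    ultimately show False
      using no_fixed_point by blast
  qed
  then have "0 \<le> Re (herm_form k l (unit_vec (k+l) 0) (unit_vec (k+l) 0))"
    using U_group_herm_form_nonneg[OF \<open>A \<in> U_group k l\<close>] by simp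
  then show False
    using Re_herm_form_unit_vec_0[OF \<open>0 < k\<close>, of l] by simp
qed

end
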